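(* Let $\alpha\in\mathbb R\setminus\{0\}$, $k\ge3$ an integer and $\mathbf L=\mathbf a^k-\alpha^k\mathbf 1$ on $\mathcal H_a$. Define $\mathcal E^a_{\mathbf L}=\mathrm{Span}\{(\mathbf L^\dagger)^j|v\rangle\mid j\in\mathbb N,\ |v\rangle\in\ker\mathbf L\}$ and $\mathcal E^\sharp_{\mathbf L}=\mathrm{Span}\{(\mathbf L^\dagger)^j[\mathbf L,\mathbf L^\dagger]^{(s)}|v\rangle\mid j\in\mathbb N,\ 1\le s\le k-1,\ |v\rangle\in\ker\mathbf L\}$. Then $\mathcal E^a_{\mathbf L}+\mathcal E^\sharp_{\mathbf L}$ is dense in $\mathcal H_a$.
   Context: $\mathcal H_a=L^2(\mathbb R,\mathbb C)$ with Fock basis $(|n\rangle)$, $\mathbf a$ the annihilation operator, $\mathbf a^\dagger$ the creation operator. $[A,B]^{(s)}$ denotes the $s$-th iterated right commutator: $[A,B]^{(1)}=[A,B]=AB-BA$, $[A,B]^{(s+1)}=[[A,B]^{(s)},B]$. $\ker\mathbf L=\mathrm{Span}\{|\alpha\omega^r\rangle\mid0\le r\le k-1\}$ with $\omega=e^{2i\pi/k}$ and coherent states $|z\rangle=e^{-|z|^2/2}\sum_n\frac{z^n}{\sqrt{n!}}|n\rangle$; these vectors lie in the domain of every polynomial in $\mathbf a,\mathbf a^\dagger$, so the expressions are well defined. *)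

theory Defs
  imports "HOL-Analysis.Analysis"
begin

text \<open>The harmonic-oscillator Hilbert space L^2(R) is represented in its Fock basis,
  i.e. as square-summable coefficient sequences nat => complex (the Hermite-function
  basis gives a unitary identification). Operators are polynomials in a, a-dagger,
  acting formally on coefficient sequences; on the vectors in question (polynomials
  in a, a-dagger applied to coherent states) this is the genuine action.\<close>

type_synonym fock = "nat \<Rightarrow> complex"

definition in_H :: "fock \<Rightarrow> bool" where
  "in_H f \<longleftrightarrow> summable (\<lambda>n. (cmod (f n))\<^sup>2)"

definition ann :: "fock \<Rightarrow> fock" where
  "ann f = (\<lambda>n. complex_of_real (sqrt (real (Suc n))) * f (Suc n))"

definition cre :: "fock \<Rightarrow> fock" where
  "cre f = (\<lambda>n. if n = 0 then 0 else complex_of_real (sqrt (real n)) * f (n - 1))"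

definition opL :: "real \<Rightarrow> nat \<Rightarrow> fock \<Rightarrow> fock" where
  "opL \<alpha> k f = (\<lambda>n. (ann ^^ k) f n - complex_of_real (\<alpha> ^ k) * f n)"

definition opLdag :: "real \<Rightarrow> nat \<Rightarrow> fock \<Rightarrow> fock" where
  "opLdag \<alpha> k f = (\<lambda>n. (cre ^^ k) f n - complex_of_real (\<alpha> ^ k) * f n)"

definition comm :: "(fock \<Rightarrow> fock) \<Rightarrow> (fock \<Rightarrow> fock) \<Rightarrow> fock \<Rightarrow> fock" where
  "comm A B = (\<lambda>f n. A (B f) n - B (A f) n)"

fun rcomm :: "(fock \<Rightarrow> fock) \<Rightarrow> (fock \<Rightarrow> fock) \<Rightarrow> nat \<Rightarrow> fock \<Rightarrow> fock" where
  "rcomm A B 0 = A"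
| "rcomm A B (Suc s) = comm (rcomm A B s) B"

definition coh :: "complex \<Rightarrow> fock" where
  "coh z = (\<lambda>n. complex_of_real (exp (- (cmod z)\<^sup>2 / 2)) * z ^ n
                 / complex_of_real (sqrt (fact n)))"

definition cspan :: "fock set \<Rightarrow> fock set" where
  "cspan S = {f. \<exists>F c. finite F \<and> F \<subseteq> S \<and> f = (\<lambda>n. \<Sum>v\<in>F. c v * v n)}"

definition kerL :: "real \<Rightarrow> nat \<Rightarrow> fock set" where
  "kerL \<alpha> k = cspan {coh (complex_of_real \<alpha> * cis (2 * pi / real k) ^ r) | r. r < k}"

definition Ea :: "real \<Rightarrow> nat \<Rightarrow> fock set" where
  "Ea \<alpha> k = cspan {(opLdag \<alpha> k ^^ j) v | j v. v \<in> kerL \<alpha> k}"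

definition Esharp :: "real \<Rightarrow> nat \<Rightarrow> fock set" where
  "Esharp \<alpha> k = cspan {(opLdag \<alpha> k ^^ j) (rcomm (opL \<alpha> k) (opLdag \<alpha> k) s v)
                        | j s v. 1 \<le> s \<and> s \<le> k - 1 \<and> v \<in> kerL \<alpha> k}"

definition dense_in_H :: "fock set \<Rightarrow> bool" where
  "dense_in_H E \<longleftrightarrow> (\<forall>\<psi>. in_H \<psi> \<longrightarrow> (\<forall>\<epsilon>>0. \<exists>\<phi>\<in>E. in_H \<phi> \<and>
      (\<Sum>n. (cmod (\<psi> n - \<phi> n))\<^sup>2) < \<epsilon>\<^sup>2))"

end

theory Submission
  imports Defs
begin

text \<open>Let \<open>S\<close> be the span of \<open>E\<^sup>a + E\<^sup>\<sharp>\<close>; it suffices to put every number state \<open>|n\<rangle>\<close>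
  into its closure. Since \<open>(a\<^sup>\<dagger>)\<^sup>k = L\<^sup>\<dagger> + \<alpha>\<^sup>k\<close>, \<open>S\<close> contains \<open>(a\<^sup>\<dagger>)\<^bsup>kj\<^esup>|\<alpha>\<omega>\<^sup>r\<rangle>\<close> and
  \<open>(a\<^sup>\<dagger>)\<^bsup>ki\<^esup>[L,L\<^sup>\<dagger>]\<^bsup>(s)\<^esup>|\<alpha>\<rangle>\<close>. The commutator \<open>[L,L\<^sup>\<dagger>]\<^bsup>(s)\<^esup>\<close> is
  \<open>(a\<^sup>\<dagger>)\<^bsup>k(s-1)\<^esup> Q\<^sub>s(N)\<close> with \<open>Q\<^sub>s\<close> of degree exactly \<open>k - s\<close> in the falling-factorial basis,
  and \<open>N(N-1)\<dots>(N-t+1)|\<alpha>\<rangle> = \<alpha>\<^sup>t (a\<^sup>\<dagger>)\<^sup>t|\<alpha>\<rangle>\<close>; solving this triangular system gives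
  \<open>(a\<^sup>\<dagger>)\<^sup>p|\<alpha>\<rangle> \<in> S\<close> for all \<open>p \<ge> k(k-2)\<close>. Then \<open>e\<^bsup>-\<alpha>a\<^sup>\<dagger>\<^esup>(a\<^sup>\<dagger>)\<^sup>n|\<alpha>\<rangle>\<close>, a multiple of
  \<open>|n\<rangle>\<close>, is a limit of elements of \<open>S\<close> for \<open>n \<ge> k(k-2)\<close>. The lower \<open>|d\<rangle>\<close> follow by downward
  induction: averaging \<open>(a\<^sup>\<dagger>)\<^bsup>k\<lfloor>d/k\<rfloor>\<^esup>|\<alpha>\<omega>\<^sup>r\<rangle>\<close> over \<open>r\<close> against a character of \<open>\<int>/k\<close> leaves a
  vector whose lowest nonzero component sits at level \<open>d\<close>.\<close>

section \<open>Square-summable sequences\<close>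

definition sqnorm :: "fock \<Rightarrow> real" where
  "sqnorm f = (\<Sum>n. (cmod (f n))\<^sup>2)"

lemma in_H_bounded:
  assumes "\<And>n. (cmod (f n))\<^sup>2 \<le> g n" "summable g"
  shows "in_H f" "sqnorm f \<le> suminf g"
proof -
  show "in_H f" unfolding in_H_def
    by (rule summable_comparison_test'[OF assms(2), where N=0]) (use assms(1) in simp)
  then show "sqnorm f \<le> suminf g" unfolding sqnorm_def in_H_def
    by (intro suminf_le assms)
qed

lemma sqnorm_nonneg: "in_H f \<Longrightarrow> 0 \<le> sqnorm f"
  unfolding sqnorm_def in_H_def by (intro suminf_nonneg) auto

lemma norm_add_squared_le: "(cmod (a + b))\<^sup>2 \<le> 2 * (cmod a)\<^sup>2 + 2 * (cmod b)\<^sup>2"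
proof -
  have "(cmod (a + b))\<^sup>2 \<le> (cmod a + cmod b)\<^sup>2"
    by (simp add: norm_triangle_ineq power_mono)
  also have "\<dots> \<le> 2 * (cmod a)\<^sup>2 + 2 * (cmod b)\<^sup>2"
    using zero_le_power2[of "cmod a - cmod b"] by (simp add: power2_eq_square algebra_simps)
  finally show ?thesis .
qed

lemma in_H_add:
  assumes "in_H f" "in_H g"
  shows "in_H (\<lambda>n. f n + g n)" "sqnorm (\<lambda>n. f n + g n) \<le> 2 * sqnorm f + 2 * sqnorm g"
proof -
  have s: "summable (\<lambda>n. 2 * (cmod (f n))\<^sup>2 + 2 * (cmod (g n))\<^sup>2)"
    using assms unfolding in_H_def by (intro summable_add summable_mult)
  show "in_H (\<lambda>n. f n + g n)" "sqnorm (\<lambda>n. f n + g n) \<le> 2 * sqnorm f + 2 * sqnorm g"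
    using in_H_bounded[OF norm_add_squared_le s] assms
    unfolding sqnorm_def in_H_def by (simp_all add: suminf_add[symmetric] suminf_mult)
qed

lemma in_H_scale:
  assumes "in_H f"
  shows "in_H (\<lambda>n. c * f n)" "sqnorm (\<lambda>n. c * f n) = (cmod c)\<^sup>2 * sqnorm f"
  using assms summable_mult[of "\<lambda>n. (cmod (f n))\<^sup>2" "(cmod c)\<^sup>2"]
  unfolding in_H_def sqnorm_def by (simp_all add: norm_mult power_mult_distrib suminf_mult)

lemma in_H_diff:
  assumes "in_H f" "in_H g"
  shows "in_H (\<lambda>n. f n - g n)" "sqnorm (\<lambda>n. f n - g n) \<le> 2 * sqnorm f + 2 * sqnorm g"
  using in_H_add[OF assms(1) in_H_scale(1)[OF assms(2), of "-1"]]
    in_H_scale(2)[OF assms(2), of "-1"] by simp_all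

lemma in_H_sum:
  "finite I \<Longrightarrow> (\<And>i. i \<in> I \<Longrightarrow> in_H (g i)) \<Longrightarrow> in_H (\<lambda>n. \<Sum>i\<in>I. g i n)"
proof (induction I rule: finite_induct)
  case empty
  show ?case unfolding in_H_def by simp
next
  case (insert x F)
  then show ?case using in_H_add(1)[of "g x" "\<lambda>n. \<Sum>i\<in>F. g i n"] by simp
qed

lemma summable_tail_small:
  fixes B :: "nat \<Rightarrow> real"
  assumes "summable B" "0 < \<delta>"
  obtains M0 where "\<And>M. summable (\<lambda>m. if M \<le> m then B m else 0)"
    and "\<And>M. M0 \<le> M \<Longrightarrow> (\<Sum>m. if M \<le> m then B m else 0) < \<delta>"
proof -
  have shift: "(\<lambda>m. if M \<le> m then B m else 0) sums (\<Sum>i. B (i + M))" for M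
    using sums_zero_iff_shift[of M "\<lambda>m. if M \<le> m then B m else 0" "\<Sum>i. B (i + M)"] assms(1)
    by (simp add: summable_sums)
  obtain M0 where M0: "\<And>M. M0 \<le> M \<Longrightarrow> norm (\<Sum>i. B (i + M)) < \<delta>"
    using suminf_exist_split[OF assms(2,1)] by blast
  show ?thesis
  proof (rule that)
    show "summable (\<lambda>m. if M \<le> m then B m else 0)" for M
      using shift by (rule sums_summable)
    show "(\<Sum>m. if M \<le> m then B m else 0) < \<delta>" if "M0 \<le> M" for M
      using sums_unique[OF shift[of M]] M0[OF that] by simp
  qed
qed

section \<open>Subspaces and their closures\<close>

definition fock_subspace :: "fock set \<Rightarrow> bool" where
  "fock_subspace S \<longleftrightarrow> (\<lambda>n. 0) \<in> S \<and> (\<forall>x\<in>S. \<forall>y\<in>S. (\<lambda>n. x n + y n) \<in> S)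
     \<and> (\<forall>c. \<forall>x\<in>S. (\<lambda>n. c * x n) \<in> S)"

lemma fock_subspaceI:
  assumes "(\<lambda>n. 0) \<in> S" "\<And>x y. x \<in> S \<Longrightarrow> y \<in> S \<Longrightarrow> (\<lambda>n. x n + y n) \<in> S"
    "\<And>c x. x \<in> S \<Longrightarrow> (\<lambda>n. c * x n) \<in> S"
  shows "fock_subspace S"
  using assms unfolding fock_subspace_def by blast

lemma
  assumes "fock_subspace S"
  shows fock_subspace_zero: "(\<lambda>n. 0) \<in> S"
    and fock_subspace_add: "x \<in> S \<Longrightarrow> y \<in> S \<Longrightarrow> (\<lambda>n. x n + y n) \<in> S"
    and fock_subspace_scale: "x \<in> S \<Longrightarrow> (\<lambda>n. c * x n) \<in> S"
  using assms unfolding fock_subspace_def by blast+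

lemma fock_subspace_diff:
  assumes "fock_subspace S" "x \<in> S" "y \<in> S"
  shows "(\<lambda>n. x n - y n) \<in> S"
  using fock_subspace_add[OF assms(1,2) fock_subspace_scale[OF assms(1,3), of "-1"]] by simp

lemma fock_subspace_sum:
  assumes "fock_subspace S"
  shows "finite I \<Longrightarrow> (\<And>i. i \<in> I \<Longrightarrow> g i \<in> S) \<Longrightarrow> (\<lambda>n. \<Sum>i\<in>I. g i n) \<in> S"
proof (induction I rule: finite_induct)
  case empty
  then show ?case using fock_subspace_zero[OF assms] by simp
next
  case (insert x F)
  then show ?case using fock_subspace_add[OF assms, of "g x" "\<lambda>n. \<Sum>i\<in>F. g i n"] by simp
qed

lemma fock_subspace_cancel:
  assumes "fock_subspace S" "(\<lambda>n. c * x n) \<in> S" "c \<noteq> 0"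
  shows "x \<in> S"
  using fock_subspace_scale[OF assms(1,2), of "inverse c"] assms(3)
  by (simp add: mult.assoc[symmetric])

lemma cspan_superset: "x \<in> A \<Longrightarrow> x \<in> cspan A"
  unfolding cspan_def by (intro CollectI exI[of _ "{x}"] exI[of _ "\<lambda>_. 1"]) auto

lemma fock_subspace_cspan: "fock_subspace (cspan A)"
proof (rule fock_subspaceI)
  show "(\<lambda>n. 0) \<in> cspan A"
    unfolding cspan_def by (intro CollectI exI[of _ "{}"]) auto
next
  fix x y assume "x \<in> cspan A" "y \<in> cspan A"
  then obtain F c G d where F: "finite F" "F \<subseteq> A" "x = (\<lambda>n. \<Sum>v\<in>F. c v * v n)"
    and G: "finite G" "G \<subseteq> A" "y = (\<lambda>n. \<Sum>v\<in>G. d v * v n)"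
    unfolding cspan_def by blast
  have "x = (\<lambda>n. \<Sum>v\<in>F \<union> G. (if v \<in> F then c v else 0) * v n)"
    unfolding F(3) using F(1) G(1) by (intro ext sum.mono_neutral_cong_left) auto
  moreover have "y = (\<lambda>n. \<Sum>v\<in>F \<union> G. (if v \<in> G then d v else 0) * v n)"
    unfolding G(3) using F(1) G(1) by (intro ext sum.mono_neutral_cong_left) auto
  ultimately have "(\<lambda>n. x n + y n)
      = (\<lambda>n. \<Sum>v\<in>F \<union> G. ((if v \<in> F then c v else 0) + (if v \<in> G then d v else 0)) * v n)"
    by (simp add: sum.distrib distrib_right)
  then show "(\<lambda>n. x n + y n) \<in> cspan A"
    unfolding cspan_def using F G by (intro CollectI exI conjI) auto
next
  fix a x assume "x \<in> cspan A"
  then obtain F c where F: "finite F" "F \<subseteq> A" "x = (\<lambda>n. \<Sum>v\<in>F. c v * v n)"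
    unfolding cspan_def by blast
  then have "(\<lambda>n. a * x n) = (\<lambda>n. \<Sum>v\<in>F. (a * c v) * v n)"
    by (simp add: sum_distrib_left mult.assoc)
  then show "(\<lambda>n. a * x n) \<in> cspan A"
    unfolding cspan_def using F by (intro CollectI exI conjI) auto
qed

definition sum_set :: "fock set \<Rightarrow> fock set \<Rightarrow> fock set" where
  "sum_set U W = {(\<lambda>n. x n + y n) | x y. x \<in> U \<and> y \<in> W}"

lemma fock_subspace_sum_set:
  assumes "fock_subspace U" "fock_subspace W"
  shows "fock_subspace (sum_set U W)"
proof (rule fock_subspaceI)
  show "(\<lambda>n. 0) \<in> sum_set U W"
    unfolding sum_set_def using assms
    by (intro CollectI exI[of _ "\<lambda>n. 0"]) (simp add: fock_subspace_zero)
next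
  fix u w assume "u \<in> sum_set U W" "w \<in> sum_set U W"
  then obtain x y x' y' where "x \<in> U" "y \<in> W" "x' \<in> U" "y' \<in> W"
    and "u = (\<lambda>n. x n + y n)" "w = (\<lambda>n. x' n + y' n)"
    unfolding sum_set_def by blast
  moreover have "(\<lambda>n. u n + w n) = (\<lambda>n. (x n + x' n) + (y n + y' n))"
    using calculation by (simp add: algebra_simps)
  ultimately show "(\<lambda>n. u n + w n) \<in> sum_set U W"
    unfolding sum_set_def using assms
    by (intro CollectI exI[of _ "\<lambda>n. x n + x' n"] exI[of _ "\<lambda>n. y n + y' n"])
      (simp add: fock_subspace_add)
next
  fix c u assume "u \<in> sum_set U W"
  then obtain x y where "x \<in> U" "y \<in> W" "u = (\<lambda>n. x n + y n)"
    unfolding sum_set_def by blast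
  moreover have "(\<lambda>n. c * u n) = (\<lambda>n. c * x n + c * y n)"
    using calculation by (simp add: algebra_simps)
  ultimately show "(\<lambda>n. c * u n) \<in> sum_set U W"
    unfolding sum_set_def using assms
    by (intro CollectI exI[of _ "\<lambda>n. c * x n"] exI[of _ "\<lambda>n. c * y n"])
      (simp add: fock_subspace_scale)
qed

lemma sum_set_left: "fock_subspace W \<Longrightarrow> x \<in> U \<Longrightarrow> x \<in> sum_set U W"
  unfolding sum_set_def by (intro CollectI exI[of _ x] exI[of _ "\<lambda>n. 0"]) (simp add: fock_subspace_zero)

lemma sum_set_right: "fock_subspace U \<Longrightarrow> y \<in> W \<Longrightarrow> y \<in> sum_set U W"
  unfolding sum_set_def by (intro CollectI exI[of _ "\<lambda>n. 0"] exI[of _ y]) (simp add: fock_subspace_zero)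

definition H_closure :: "fock set \<Rightarrow> fock set" where
  "H_closure S = {\<psi>. in_H \<psi> \<and> (\<forall>\<delta>>0. \<exists>\<phi>\<in>S. in_H \<phi> \<and> sqnorm (\<lambda>n. \<psi> n - \<phi> n) < \<delta>)}"

lemma dense_in_H_iff: "dense_in_H S \<longleftrightarrow> (\<forall>\<psi>. in_H \<psi> \<longrightarrow> \<psi> \<in> H_closure S)"
  unfolding dense_in_H_def H_closure_def sqnorm_def
proof (intro iffI allI impI CollectI conjI)
  fix \<psi> :: fock and \<delta> :: real
  assume dense: "\<forall>\<psi>. in_H \<psi> \<longrightarrow> (\<forall>\<epsilon>>0. \<exists>\<phi>\<in>S. in_H \<phi> \<and> (\<Sum>n. (cmod (\<psi> n - \<phi> n))\<^sup>2) < \<epsilon>\<^sup>2)"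
    and "in_H \<psi>" "0 < \<delta>"
  from dense[rule_format, OF \<open>in_H \<psi>\<close> real_sqrt_gt_zero[OF \<open>0 < \<delta>\<close>]]
  show "\<exists>\<phi>\<in>S. in_H \<phi> \<and> (\<Sum>n. (cmod (\<psi> n - \<phi> n))\<^sup>2) < \<delta>"
    using \<open>0 < \<delta>\<close> by simp
next
  fix \<psi> :: fock and \<epsilon> :: real
  assume close: "\<forall>\<psi>. in_H \<psi> \<longrightarrow> \<psi> \<in> {\<psi>. in_H \<psi> \<and> (\<forall>\<delta>>0. \<exists>\<phi>\<in>S. in_H \<phi> \<and> (\<Sum>n. (cmod (\<psi> n - \<phi> n))\<^sup>2) < \<delta>)}"
    and "in_H \<psi>" "0 < \<epsilon>"
  then have "0 < \<epsilon>\<^sup>2" by simp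
  with close \<open>in_H \<psi>\<close>
  show "\<exists>\<phi>\<in>S. in_H \<phi> \<and> (\<Sum>n. (cmod (\<psi> n - \<phi> n))\<^sup>2) < \<epsilon>\<^sup>2"
    by blast
qed

lemma in_H_closure_in_H: "\<psi> \<in> H_closure S \<Longrightarrow> in_H \<psi>"
  unfolding H_closure_def by blast

lemma H_closure_superset: "x \<in> S \<Longrightarrow> in_H x \<Longrightarrow> x \<in> H_closure S"
  unfolding H_closure_def sqnorm_def by (auto intro!: bexI[of _ x])

text \<open>Squared distances obey a triangle inequality up to the factor 2, hence the \<open>\<delta>/4\<close>.\<close>

lemma H_closure_closed:
  assumes "in_H \<psi>" "\<And>\<delta>. 0 < \<delta> \<Longrightarrow> \<exists>\<zeta>\<in>H_closure S. sqnorm (\<lambda>n. \<psi> n - \<zeta> n) < \<delta>"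
  shows "\<psi> \<in> H_closure S"
  unfolding H_closure_def
proof (intro CollectI conjI allI impI assms(1))
  fix \<delta> :: real assume "0 < \<delta>"
  then obtain \<zeta> where \<zeta>: "\<zeta> \<in> H_closure S" "sqnorm (\<lambda>n. \<psi> n - \<zeta> n) < \<delta>/4"
    using assms(2)[of "\<delta>/4"] by auto
  moreover have "0 < \<delta>/4" using \<open>0 < \<delta>\<close> by simp
  ultimately obtain \<phi> where \<phi>: "\<phi> \<in> S" "in_H \<phi>" "sqnorm (\<lambda>n. \<zeta> n - \<phi> n) < \<delta>/4"
    unfolding H_closure_def by blast
  have "sqnorm (\<lambda>n. (\<psi> n - \<zeta> n) + (\<zeta> n - \<phi> n))
      \<le> 2 * sqnorm (\<lambda>n. \<psi> n - \<zeta> n) + 2 * sqnorm (\<lambda>n. \<zeta> n - \<phi> n)"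
    by (intro in_H_add(2) in_H_diff(1) assms(1) \<phi>(2) in_H_closure_in_H[OF \<zeta>(1)])
  with \<zeta>(2) \<phi> show "\<exists>\<phi>\<in>S. in_H \<phi> \<and> sqnorm (\<lambda>n. \<psi> n - \<phi> n) < \<delta>"
    by (intro bexI[of _ \<phi>]) auto
qed

lemma H_closure_add:
  assumes S: "fock_subspace S" and u: "u \<in> H_closure S" and w: "w \<in> H_closure S"
  shows "(\<lambda>n. u n + w n) \<in> H_closure S"
proof -
  note uw = in_H_closure_in_H[OF u] in_H_closure_in_H[OF w]
  show ?thesis
  proof (rule H_closure_closed[OF in_H_add(1)[OF uw]])
    fix \<delta> :: real assume "0 < \<delta>"
    then have "0 < \<delta>/4" by simp
    then obtain \<phi> \<phi>' where \<phi>: "\<phi> \<in> S" "in_H \<phi>" "sqnorm (\<lambda>n. u n - \<phi> n) < \<delta>/4"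
      and \<phi>': "\<phi>' \<in> S" "in_H \<phi>'" "sqnorm (\<lambda>n. w n - \<phi>' n) < \<delta>/4"
      using u w unfolding H_closure_def by blast
    have "sqnorm (\<lambda>n. (u n - \<phi> n) + (w n - \<phi>' n))
        \<le> 2 * sqnorm (\<lambda>n. u n - \<phi> n) + 2 * sqnorm (\<lambda>n. w n - \<phi>' n)"
      by (intro in_H_add(2) in_H_diff(1) uw \<phi>(2) \<phi>'(2))
    moreover have "(\<lambda>n. \<phi> n + \<phi>' n) \<in> H_closure S"
      using \<phi> \<phi>' by (intro H_closure_superset fock_subspace_add[OF S] in_H_add(1))
    ultimately show "\<exists>\<zeta>\<in>H_closure S. sqnorm (\<lambda>n. u n + w n - \<zeta> n) < \<delta>"
      using \<phi>(3) \<phi>'(3) by (intro bexI[of _ "\<lambda>n. \<phi> n + \<phi>' n"]) (auto simp: algebra_simps)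
  qed
qed

lemma H_closure_scale:
  assumes S: "fock_subspace S" and u: "u \<in> H_closure S"
  shows "(\<lambda>n. c * u n) \<in> H_closure S"
proof -
  note uH = in_H_closure_in_H[OF u]
  show ?thesis
  proof (rule H_closure_closed[OF in_H_scale(1)[OF uH]])
    fix \<delta> :: real assume "0 < \<delta>"
    then have "0 < \<delta> / ((cmod c)\<^sup>2 + 1)" by (simp add: add_nonneg_pos)
    then obtain \<phi> where \<phi>: "\<phi> \<in> S" "in_H \<phi>" "sqnorm (\<lambda>n. u n - \<phi> n) < \<delta> / ((cmod c)\<^sup>2 + 1)"
      using u unfolding H_closure_def by blast
    have d: "in_H (\<lambda>n. u n - \<phi> n)" by (rule in_H_diff(1)[OF uH \<phi>(2)])
    have "sqnorm (\<lambda>n. c * (u n - \<phi> n)) = (cmod c)\<^sup>2 * sqnorm (\<lambda>n. u n - \<phi> n)"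
      by (rule in_H_scale(2)[OF d])
    also have "\<dots> \<le> ((cmod c)\<^sup>2 + 1) * sqnorm (\<lambda>n. u n - \<phi> n)"
      by (intro mult_right_mono sqnorm_nonneg d) auto
    also have "\<dots> < \<delta>" using \<phi>(3) by (simp add: field_simps add_pos_nonneg)
    finally have "sqnorm (\<lambda>n. c * u n - c * \<phi> n) < \<delta>" by (simp add: algebra_simps)
    moreover have "(\<lambda>n. c * \<phi> n) \<in> H_closure S"
      using \<phi> by (intro H_closure_superset fock_subspace_scale[OF S] in_H_scale(1))
    ultimately show "\<exists>\<zeta>\<in>H_closure S. sqnorm (\<lambda>n. c * u n - \<zeta> n) < \<delta>"
      by (intro bexI[of _ "\<lambda>n. c * \<phi> n"])
  qed
qed

lemma fock_subspace_H_closure: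
  assumes "fock_subspace S"
  shows "fock_subspace (H_closure S)"
proof (rule fock_subspaceI)
  show "(\<lambda>n. 0) \<in> H_closure S"
    by (rule H_closure_superset[OF fock_subspace_zero[OF assms]]) (simp add: in_H_def)
qed (auto intro: H_closure_add[OF assms] H_closure_scale[OF assms])

definition fock_basis :: "nat \<Rightarrow> fock" where
  "fock_basis i = (\<lambda>m. if m = i then 1 else 0)"

lemma in_H_fock_basis: "in_H (fock_basis i)"
  using in_H_bounded(1)[of "fock_basis i" "\<lambda>m. if m = i then 1 else 0"]
  by (simp add: fock_basis_def)

lemma H_closure_tail:
  assumes S: "fock_subspace S" and basis: "\<And>m. N \<le> m \<Longrightarrow> fock_basis m \<in> H_closure S"
    and "in_H \<psi>" and low: "\<And>m. m < N \<Longrightarrow> \<psi> m = 0"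
  shows "\<psi> \<in> H_closure S"
proof (rule H_closure_closed[OF \<open>in_H \<psi>\<close>])
  fix \<delta> :: real assume "0 < \<delta>"
  then obtain M0 where tail: "\<And>M. summable (\<lambda>m. if M \<le> m then (cmod (\<psi> m))\<^sup>2 else 0)"
    "\<And>M. M0 \<le> M \<Longrightarrow> (\<Sum>m. if M \<le> m then (cmod (\<psi> m))\<^sup>2 else 0) < \<delta>"
    using summable_tail_small \<open>in_H \<psi>\<close> unfolding in_H_def by blast
  define M where "M = max M0 N"
  define T where "T = (\<lambda>m. \<Sum>i\<in>{N..<M}. \<psi> i * fock_basis i m)"
  have "T \<in> H_closure S"
    unfolding T_def using fock_subspace_H_closure[OF S]
    by (intro fock_subspace_sum fock_subspace_scale basis) auto
  moreover have "T m = (if m < M then \<psi> m else 0)" for m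
    using low[of m] unfolding T_def fock_basis_def M_def
    by (auto simp: if_distrib[of "\<lambda>x. _ * x"] cong: if_cong)
  then have "sqnorm (\<lambda>m. \<psi> m - T m) \<le> (\<Sum>m. if M \<le> m then (cmod (\<psi> m))\<^sup>2 else 0)"
    by (intro in_H_bounded(2) tail(1)) simp
  ultimately show "\<exists>\<zeta>\<in>H_closure S. sqnorm (\<lambda>m. \<psi> m - \<zeta> m) < \<delta>"
    using tail(2)[of M] unfolding M_def by (intro bexI[of _ T]) auto
qed

lemma fock_basis_in_H_closure_lowest:
  assumes S: "fock_subspace S" and X: "X \<in> H_closure S"
    and below: "\<And>m. m < d \<Longrightarrow> X m = 0" and "X d \<noteq> 0"
    and above: "\<And>m. d < m \<Longrightarrow> fock_basis m \<in> H_closure S"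
  shows "fock_basis d \<in> H_closure S"
proof -
  have closure: "fock_subspace (H_closure S)"
    by (rule fock_subspace_H_closure[OF S])
  have "(\<lambda>m. X m - X d * fock_basis d m) \<in> H_closure S"
  proof (rule H_closure_tail[OF S, where N = "Suc d"])
    show "in_H (\<lambda>m. X m - X d * fock_basis d m)"
      by (intro in_H_diff(1) in_H_scale(1) in_H_closure_in_H[OF X] in_H_fock_basis)
  next
    show "fock_basis m \<in> H_closure S" if "Suc d \<le> m" for m
      using that by (intro above) simp
  next
    show "X m - X d * fock_basis d m = 0" if "m < Suc d" for m
      using that below by (cases "m = d") (auto simp: fock_basis_def)
  qed
  then have "(\<lambda>m. X m - (X m - X d * fock_basis d m)) \<in> H_closure S"
    by (rule fock_subspace_diff[OF closure X])
  then have "(\<lambda>m. X d * fock_basis d m) \<in> H_closure S" by simp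
  then show ?thesis by (rule fock_subspace_cancel[OF closure _ \<open>X d \<noteq> 0\<close>])
qed

lemma dense_in_H_if_basis_in_closure:
  assumes "fock_subspace S" "\<And>m. fock_basis m \<in> H_closure S"
  shows "dense_in_H S"
  unfolding dense_in_H_iff using H_closure_tail[where N=0] assms by blast

section \<open>Ladder operators\<close>

definition falling_fact :: "nat \<Rightarrow> nat \<Rightarrow> real" where
  "falling_fact n i = fact i * real (n choose i)"

lemma falling_fact_eq: "i \<le> n \<Longrightarrow> falling_fact n i = fact n / fact (n - i)"
  unfolding falling_fact_def by (simp add: binomial_fact field_simps)

lemma falling_fact_eq_0: "n < i \<Longrightarrow> falling_fact n i = 0"
  unfolding falling_fact_def by simp

lemma falling_fact_nonneg: "0 \<le> falling_fact n i"
  unfolding falling_fact_def by simp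

lemma falling_fact_Suc_Suc: "falling_fact (Suc n) (Suc i) = real (Suc n) * falling_fact n i"
proof -
  have "real (Suc i) * real (Suc n choose Suc i) = real (Suc n) * real (n choose i)"
    by (metis Suc_times_binomial of_nat_mult)
  then show ?thesis
    unfolding falling_fact_def fact_Suc by (simp only: of_nat_fact mult_ac)
qed

lemma cre_pow:
  "(cre ^^ p) f n = (if p \<le> n then complex_of_real (sqrt (falling_fact n p)) * f (n - p) else 0)"
proof (induction p arbitrary: n)
  case 0
  then show ?case by (simp add: falling_fact_def)
next
  case (Suc p)
  show ?case
  proof (cases n)
    case (Suc m)
    then have "(cre ^^ Suc p) f n = complex_of_real (sqrt (real n)) * (cre ^^ p) f m"
      by (simp add: cre_def)
    then show ?thesis
      using Suc by (simp add: Suc.IH falling_fact_Suc_Suc real_sqrt_mult mult.assoc)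
  qed (simp add: cre_def)
qed

lemma ann_pow: "(ann ^^ p) f n = complex_of_real (sqrt (falling_fact (n + p) p)) * f (n + p)"
proof (induction p arbitrary: n f)
  case 0
  then show ?case by (simp add: falling_fact_def)
next
  case (Suc p)
  have "(ann ^^ Suc p) f n = (ann ^^ p) (ann f) n"
    by (simp only: funpow_Suc_right comp_def)
  also have "\<dots> = complex_of_real (sqrt (falling_fact (n + p) p)) * ann f (n + p)"
    by (rule Suc.IH)
  also have "\<dots> = complex_of_real (sqrt (falling_fact (n + Suc p) (Suc p))) * f (n + Suc p)"
    unfolding ann_def by (simp add: falling_fact_Suc_Suc real_sqrt_mult mult_ac)
  finally show ?case .
qed

lemma cre_pow_linear:
  "(cre ^^ p) (\<lambda>m. a * f m + (\<Sum>i\<in>I. c i * g i m))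
     = (\<lambda>n. a * (cre ^^ p) f n + (\<Sum>i\<in>I. c i * (cre ^^ p) (g i) n))"
  by (auto simp: cre_pow sum_distrib_left algebra_simps)

lemma cre_pow_cre_pow: "(cre ^^ p) ((cre ^^ q) f) = (cre ^^ (p + q)) f"
  by (simp add: funpow_add)

lemma cre_pow_add: "(cre ^^ p) (\<lambda>m. f m + g m) = (\<lambda>n. (cre ^^ p) f n + (cre ^^ p) g n)"
  by (auto simp: cre_pow algebra_simps)

lemma cre_pow_scale: "(cre ^^ p) (\<lambda>m. c * f m) = (\<lambda>n. c * (cre ^^ p) f n)"
  by (auto simp: cre_pow)

lemma cre_pow_diff: "(cre ^^ p) (\<lambda>m. f m - g m) = (\<lambda>n. (cre ^^ p) f n - (cre ^^ p) g n)"
  by (auto simp: cre_pow algebra_simps)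

lemma diagonal_cre_pow:
  "(\<lambda>m. Q m * (cre ^^ p) f m) = (cre ^^ p) (\<lambda>m. Q (m + p) * f m)"
  by (auto simp: cre_pow)

section \<open>The iterated commutators\<close>

definition shift_diff :: "nat \<Rightarrow> (nat \<Rightarrow> real) \<Rightarrow> nat \<Rightarrow> real" where
  "shift_diff k Q n = Q (n + k) - Q n"

lemma comm_opL_opLdag:
  "comm (opL \<alpha> k) (opLdag \<alpha> k) f
     = (\<lambda>n. complex_of_real (shift_diff k (\<lambda>m. falling_fact m k) n) * f n)"
proof
  fix n
  define c where "c = complex_of_real (\<alpha> ^ k)"
  define A where "A = complex_of_real (sqrt (falling_fact (n + k) k))"
  define B where "B = complex_of_real (sqrt (falling_fact n k))"
  have AA: "A * A = complex_of_real (falling_fact (n + k) k)"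
    and BB: "B * B = complex_of_real (falling_fact n k)"
    unfolding A_def B_def by (simp_all add: falling_fact_nonneg flip: of_real_mult)
  have LLdag: "opL \<alpha> k (opLdag \<alpha> k f) n = A * (A * f n - c * f (n + k)) - c * ((cre ^^ k) f n - c * f n)"
    unfolding opL_def opLdag_def ann_pow cre_pow A_def c_def by simp
  have LdagL: "opLdag \<alpha> k (opL \<alpha> k f) n
      = (cre ^^ k) (\<lambda>m. (ann ^^ k) f m - c * f m) n - c * (A * f (n + k) - c * f n)"
    unfolding opL_def opLdag_def ann_pow A_def c_def by simp
  have cre_L: "(cre ^^ k) (\<lambda>m. (ann ^^ k) f m - c * f m) n = B * B * f n - c * (cre ^^ k) f n"
    unfolding cre_pow ann_pow B_def by (simp add: falling_fact_eq_0 algebra_simps flip: of_real_mult)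
  have "comm (opL \<alpha> k) (opLdag \<alpha> k) f n = (A * A - B * B) * f n"
    unfolding comm_def LLdag LdagL cre_L by (simp add: algebra_simps)
  then show "comm (opL \<alpha> k) (opLdag \<alpha> k) f n
      = complex_of_real (shift_diff k (\<lambda>m. falling_fact m k) n) * f n"
    unfolding AA BB shift_diff_def by simp
qed

text \<open>For \<open>s \<ge> 1\<close> the \<open>s\<close>-th iterated commutator is \<open>(a\<^sup>\<dagger>)\<^bsup>k(s-1)\<^esup> Q\<^sub>s(N)\<close>, where \<open>N\<close> is
  the number operator and \<open>Q\<^sub>s\<close> is the \<open>s\<close>-fold \<open>k\<close>-step difference of the falling factorial
  \<open>n(n-1)\<dots>(n-k+1)\<close>, the eigenvalue of \<open>(a\<^sup>\<dagger>)\<^sup>k a\<^sup>k\<close> on \<open>|n\<rangle>\<close>.\<close>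

lemma rcomm_opL_opLdag:
  assumes "1 \<le> s"
  shows "rcomm (opL \<alpha> k) (opLdag \<alpha> k) s f
    = (cre ^^ (k * (s - 1)))
        (\<lambda>m. complex_of_real ((shift_diff k ^^ s) (\<lambda>n. falling_fact n k) m) * f m)"
  using assms
proof (induction s arbitrary: f rule: nat_induct_at_least)
  case base
  show ?case by (simp add: comm_opL_opLdag)
next
  case (Suc s)
  define P where "P = k * (s - 1)"
  define Q where "Q m = complex_of_real ((shift_diff k ^^ s) (\<lambda>n. falling_fact n k) m)" for m
  define c where "c = complex_of_real (\<alpha> ^ k)"
  have Ldag: "opLdag \<alpha> k g = (\<lambda>n. (cre ^^ k) g n - c * g n)" for g
    unfolding opLdag_def c_def ..
  have "rcomm (opL \<alpha> k) (opLdag \<alpha> k) (Suc s) f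
      = (\<lambda>n. (cre ^^ P) (\<lambda>m. Q m * opLdag \<alpha> k f m) n
           - opLdag \<alpha> k ((cre ^^ P) (\<lambda>m. Q m * f m)) n)"
    by (simp add: comm_def Suc.IH P_def Q_def)
  also have "(\<lambda>m. Q m * opLdag \<alpha> k f m) = (\<lambda>m. (cre ^^ k) (\<lambda>m. Q (m + k) * f m) m - c * (Q m * f m))"
    unfolding Ldag diagonal_cre_pow[symmetric] by (simp add: algebra_simps)
  also have "(\<lambda>n. (cre ^^ P) (\<lambda>m. (cre ^^ k) (\<lambda>m. Q (m + k) * f m) m - c * (Q m * f m)) n
        - opLdag \<alpha> k ((cre ^^ P) (\<lambda>m. Q m * f m)) n)
      = (\<lambda>n. (cre ^^ (P + k)) (\<lambda>m. Q (m + k) * f m) n - (cre ^^ (P + k)) (\<lambda>m. Q m * f m) n)"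
    unfolding Ldag cre_pow_diff cre_pow_scale cre_pow_cre_pow by (simp add: add.commute)
  also have "\<dots> = (cre ^^ (P + k)) (\<lambda>m. (Q (m + k) - Q m) * f m)"
    unfolding left_diff_distrib cre_pow_diff ..
  also have "(\<lambda>m. (Q (m + k) - Q m) * f m)
      = (\<lambda>m. complex_of_real ((shift_diff k ^^ Suc s) (\<lambda>n. falling_fact n k) m) * f m)"
    by (simp only: Q_def funpow.simps(2) comp_apply of_real_diff
        shift_diff_def[of k "(shift_diff k ^^ s) (\<lambda>n. falling_fact n k)"])
  also have "P + k = k * (Suc s - 1)"
    using Suc.hyps by (simp add: P_def algebra_simps)
  finally show ?case .
qed

section \<open>Polynomials in the falling-factorial basis\<close>

definition ffact_span :: "nat \<Rightarrow> (nat \<Rightarrow> real) set" where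
  "ffact_span d = {Q. \<exists>\<gamma>. \<forall>n. Q n = (\<Sum>t<d. \<gamma> t * falling_fact n t)}"

definition ffact_leading :: "nat \<Rightarrow> real \<Rightarrow> (nat \<Rightarrow> real) \<Rightarrow> bool" where
  "ffact_leading d c Q \<longleftrightarrow> (\<exists>R\<in>ffact_span d. \<forall>n. Q n = c * falling_fact n d + R n)"

lemma ffact_span_mono:
  assumes "d \<le> d'" "Q \<in> ffact_span d"
  shows "Q \<in> ffact_span d'"
proof -
  obtain \<gamma> where \<gamma>: "\<And>n. Q n = (\<Sum>t<d. \<gamma> t * falling_fact n t)"
    using assms(2) unfolding ffact_span_def by blast
  have "Q n = (\<Sum>t<d'. (if t < d then \<gamma> t else 0) * falling_fact n t)" for n
    unfolding \<gamma> using assms(1) by (intro sum.mono_neutral_cong_right[symmetric]) auto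
  then show ?thesis unfolding ffact_span_def by (intro CollectI exI[of _ "\<lambda>t. if t < d then \<gamma> t else 0"]) simp
qed

lemma ffact_span_add:
  assumes "P \<in> ffact_span d" "Q \<in> ffact_span d"
  shows "(\<lambda>n. P n + Q n) \<in> ffact_span d"
proof -
  obtain \<gamma> \<beta> where "\<And>n. P n = (\<Sum>t<d. \<gamma> t * falling_fact n t)"
    "\<And>n. Q n = (\<Sum>t<d. \<beta> t * falling_fact n t)"
    using assms unfolding ffact_span_def by blast
  then have "P n + Q n = (\<Sum>t<d. (\<gamma> t + \<beta> t) * falling_fact n t)" for n
    by (simp add: sum.distrib distrib_right)
  then show ?thesis unfolding ffact_span_def by (intro CollectI exI[of _ "\<lambda>t. \<gamma> t + \<beta> t"]) simp
qed

lemma ffact_span_scale: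
  assumes "Q \<in> ffact_span d"
  shows "(\<lambda>n. a * Q n) \<in> ffact_span d"
proof -
  obtain \<beta> where "\<And>n. Q n = (\<Sum>t<d. \<beta> t * falling_fact n t)"
    using assms unfolding ffact_span_def by blast
  then have "a * Q n = (\<Sum>t<d. (a * \<beta> t) * falling_fact n t)" for n
    by (simp add: sum_distrib_left mult.assoc)
  then show ?thesis unfolding ffact_span_def by (intro CollectI exI[of _ "\<lambda>t. a * \<beta> t"]) simp
qed

lemma ffact_span_sum:
  "finite I \<Longrightarrow> (\<And>i. i \<in> I \<Longrightarrow> g i \<in> ffact_span d) \<Longrightarrow> (\<lambda>n. \<Sum>i\<in>I. g i n) \<in> ffact_span d"
proof (induction I rule: finite_induct)
  case empty
  have "(\<lambda>n. 0) \<in> ffact_span d"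
    unfolding ffact_span_def by (intro CollectI exI[of _ "\<lambda>_. 0"]) simp
  then show ?case by simp
next
  case (insert x F)
  then show ?case using ffact_span_add[of "g x" d "\<lambda>n. \<Sum>i\<in>F. g i n"] by simp
qed

lemma falling_fact_add:
  "falling_fact (n + k) i = (\<Sum>t\<le>i. real (i choose t) * falling_fact k (i - t) * falling_fact n t)"
proof -
  have "falling_fact (n + k) i = fact i * (\<Sum>t\<le>i. real (n choose t) * real (k choose (i - t)))"
    unfolding falling_fact_def vandermonde[of n k i, symmetric] by simp
  also have "\<dots> = (\<Sum>t\<le>i. real (i choose t) * falling_fact k (i - t) * falling_fact n t)"
    unfolding sum_distrib_left
  proof (rule sum.cong[OF refl])
    fix t assume "t \<in> {..i}"
    then have "real (fact t * fact (i - t) * (i choose t)) = real (fact i)"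
      using binomial_fact_lemma[of t i] by simp
    then have "(fact i :: real) = fact t * fact (i - t) * real (i choose t)"
      by simp
    then show "fact i * (real (n choose t) * real (k choose (i - t)))
        = real (i choose t) * falling_fact k (i - t) * falling_fact n t"
      unfolding falling_fact_def by (simp add: algebra_simps)
  qed
  finally show ?thesis .
qed

lemma shift_diff_falling_fact:
  "shift_diff k (\<lambda>n. falling_fact n i) n
     = (\<Sum>t<i. real (i choose t) * falling_fact k (i - t) * falling_fact n t)"
  unfolding shift_diff_def falling_fact_add lessThan_Suc_atMost[symmetric]
  by (simp add: falling_fact_def)

lemma shift_diff_ffact_span:
  assumes "Q \<in> ffact_span d"
  shows "shift_diff k Q \<in> ffact_span (d - 1)"
proof -
  obtain \<beta> where \<beta>: "\<And>n. Q n = (\<Sum>t<d. \<beta> t * falling_fact n t)"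
    using assms unfolding ffact_span_def by blast
  have "shift_diff k (\<lambda>n. falling_fact n t) \<in> ffact_span (d - 1)" if "t < d" for t
  proof (rule ffact_span_mono[of t])
    show "shift_diff k (\<lambda>n. falling_fact n t) \<in> ffact_span t"
      unfolding shift_diff_falling_fact ffact_span_def
      by (intro CollectI exI[of _ "\<lambda>u. real (t choose u) * falling_fact k (t - u)"]) simp
  qed (use that in simp)
  then have "(\<lambda>n. \<Sum>t<d. \<beta> t * shift_diff k (\<lambda>n. falling_fact n t) n) \<in> ffact_span (d - 1)"
    by (intro ffact_span_sum ffact_span_scale) auto
  moreover have "shift_diff k Q = (\<lambda>n. \<Sum>t<d. \<beta> t * shift_diff k (\<lambda>n. falling_fact n t) n)"
    by (rule ext) (simp add: shift_diff_def \<beta> sum_subtractf[symmetric] algebra_simps)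
  ultimately show ?thesis by simp
qed

lemma shift_diff_ffact_leading:
  assumes "1 \<le> d" "ffact_leading d c Q"
  shows "ffact_leading (d - 1) (c * real d * real k) (shift_diff k Q)"
proof -
  obtain R where R: "R \<in> ffact_span d" "\<And>n. Q n = c * falling_fact n d + R n"
    using assms(2) unfolding ffact_leading_def by blast
  obtain e where d: "d = Suc e" using assms(1) by (cases d) auto
  define R1 where "R1 n = (\<Sum>t<e. real (d choose t) * falling_fact k (d - t) * falling_fact n t)" for n
  have R1: "R1 \<in> ffact_span (d - 1)"
    unfolding R1_def ffact_span_def
    by (intro CollectI exI[of _ "\<lambda>t. real (d choose t) * falling_fact k (d - t)"]) (simp add: d)
  have lead: "shift_diff k (\<lambda>n. falling_fact n d) n = real d * real k * falling_fact n (d - 1) + R1 n" for n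
    unfolding shift_diff_falling_fact R1_def d by (simp add: falling_fact_def)
  have "shift_diff k Q n
      = (c * real d * real k) * falling_fact n (d - 1) + (c * R1 n + shift_diff k R n)" for n
    using lead[of n] unfolding shift_diff_def R(2) by (simp add: algebra_simps)
  moreover have "(\<lambda>n. c * R1 n + shift_diff k R n) \<in> ffact_span (d - 1)"
    by (intro ffact_span_add ffact_span_scale R1 shift_diff_ffact_span R(1))
  ultimately show ?thesis
    unfolding ffact_leading_def by (intro bexI[of _ "\<lambda>n. c * R1 n + shift_diff k R n"]) simp
qed

lemma funpow_shift_diff_ffact_leading:
  assumes "0 < k" "c \<noteq> 0" "ffact_leading d c Q" "s \<le> d"
  shows "\<exists>c'. c' \<noteq> 0 \<and> ffact_leading (d - s) c' ((shift_diff k ^^ s) Q)"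
  using assms(4)
proof (induction s)
  case 0
  then show ?case using assms(2,3) by auto
next
  case (Suc s)
  then obtain c' where c': "c' \<noteq> 0" "ffact_leading (d - s) c' ((shift_diff k ^^ s) Q)"
    by auto
  have "1 \<le> d - s" "d - s - 1 = d - Suc s" using Suc.prems by auto
  then have "ffact_leading (d - Suc s) (c' * real (d - s) * real k) ((shift_diff k ^^ Suc s) Q)"
    using shift_diff_ffact_leading[OF _ c'(2)] by simp
  moreover have "c' * real (d - s) * real k \<noteq> 0" using c'(1) Suc.prems assms(1) by simp
  ultimately show ?case by blast
qed

section \<open>Coherent states\<close>

definition cre_coh :: "complex \<Rightarrow> nat \<Rightarrow> fock" where
  "cre_coh z p = (cre ^^ p) (coh z)"

lemma cre_coh_eq:
  "cre_coh z p n = (if p \<le> n then complex_of_real (sqrt (falling_fact n p) * exp (- (cmod z)\<^sup>2 / 2)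
     / sqrt (fact (n - p))) * z ^ (n - p) else 0)"
  unfolding cre_coh_def cre_pow coh_def by simp

lemma norm_cre_coh_squared:
  "(cmod (cre_coh z p n))\<^sup>2
     = (exp (- (cmod z)\<^sup>2 / 2))\<^sup>2 * (falling_fact n p * ((cmod z)\<^sup>2) ^ (n - p) / fact (n - p))"
proof (cases "p \<le> n")
  case True
  define E where "E = exp (- (cmod z)\<^sup>2 / 2)"
  have "cmod (cre_coh z p n) = sqrt (falling_fact n p) * E / sqrt (fact (n - p)) * cmod z ^ (n - p)"
    using True unfolding cre_coh_eq E_def
    by (simp add: norm_mult norm_power norm_divide falling_fact_nonneg)
  moreover have "(cmod z ^ (n - p))\<^sup>2 = ((cmod z)\<^sup>2) ^ (n - p)"
    by (simp flip: power_mult add: mult.commute)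
  ultimately show ?thesis
    using falling_fact_nonneg[of n p] unfolding E_def[symmetric]
    by (simp add: power_mult_distrib power_divide)
qed (simp add: cre_coh_eq falling_fact_eq_0)

lemma falling_fact_le: "falling_fact n p \<le> fact p * 2 ^ n"
proof -
  have "real (n choose p) \<le> 2 ^ n"
    using binomial_le_pow2[of n p] by (metis of_nat_le_iff of_nat_numeral of_nat_power)
  then show ?thesis unfolding falling_fact_def by (simp add: mult_left_mono)
qed

lemma summable_falling_fact_exp:
  assumes "0 \<le> y"
  shows "summable (\<lambda>n. falling_fact n p * y ^ (n - p) / fact (n - p))"
proof -
  have "summable (\<lambda>i. fact p * 2 ^ p * (inverse (fact i) * (2 * y) ^ i))"
    by (intro summable_mult summable_exp)
  then have "summable (\<lambda>i. falling_fact (i + p) p * y ^ i / fact i)"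
  proof (rule summable_comparison_test'[where N=0])
    fix i
    show "norm (falling_fact (i + p) p * y ^ i / fact i)
        \<le> fact p * 2 ^ p * (inverse (fact i) * (2 * y) ^ i)"
      using mult_right_mono[OF falling_fact_le[of "i + p" p], of "y ^ i / fact i"] assms
      by (simp add: falling_fact_nonneg power_add field_simps)
  qed
  then show ?thesis by (subst summable_iff_shift[of _ p, symmetric]) simp
qed

lemma in_H_cre_coh: "in_H (cre_coh z p)"
  unfolding in_H_def norm_cre_coh_squared
  by (intro summable_mult summable_falling_fact_exp zero_le_power2)

lemma falling_fact_mult_coh:
  "complex_of_real (falling_fact m t) * coh z m = z ^ t * cre_coh z t m"
proof (cases "t \<le> m")
  case True
  have "falling_fact m t / sqrt (fact m) = sqrt (falling_fact m t) / sqrt (fact (m - t))"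
    using True by (simp add: falling_fact_eq real_sqrt_divide field_simps)
  moreover have "z ^ m = z ^ t * z ^ (m - t)"
    using True by (simp flip: power_add)
  ultimately show ?thesis
    unfolding cre_coh_eq coh_def using True
    by (simp add: field_simps flip: of_real_mult of_real_divide)
qed (simp add: cre_coh_eq falling_fact_eq_0)

lemma cre_pow_cre_coh: "(cre ^^ q) (cre_coh z t) = cre_coh z (q + t)"
  unfolding cre_coh_def by (rule cre_pow_cre_pow)

lemma diagonal_coh_expansion:
  assumes "ffact_leading d c Q"
  obtains \<gamma> where "(cre ^^ q) (\<lambda>m. complex_of_real (Q m) * coh z m)
     = (\<lambda>n. (complex_of_real c * z ^ d) * cre_coh z (q + d) n + (\<Sum>t<d. \<gamma> t * cre_coh z (q + t) n))"
proof -
  obtain R where R: "R \<in> ffact_span d" "\<And>n. Q n = c * falling_fact n d + R n"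
    using assms unfolding ffact_leading_def by blast
  obtain \<beta> where "\<And>n. R n = (\<Sum>t<d. \<beta> t * falling_fact n t)"
    using R(1) unfolding ffact_span_def by blast
  then have Q: "Q n = c * falling_fact n d + (\<Sum>t<d. \<beta> t * falling_fact n t)" for n
    by (simp add: R(2))
  have "(\<lambda>m. complex_of_real (Q m) * coh z m)
      = (\<lambda>m. (complex_of_real c * z ^ d) * cre_coh z d m
           + (\<Sum>t<d. (complex_of_real (\<beta> t) * z ^ t) * cre_coh z t m))"
    by (simp add: Q falling_fact_mult_coh[symmetric] distrib_right sum_distrib_right mult.assoc)
  then show ?thesis
    using that[of "\<lambda>t. complex_of_real (\<beta> t) * z ^ t"] by (simp add: cre_pow_linear cre_pow_cre_coh)
qed

section \<open>Number states from coherent states\<close>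

definition basis_weight :: "complex \<Rightarrow> nat \<Rightarrow> nat \<Rightarrow> complex" where
  "basis_weight a n m
     = complex_of_real (exp (- (cmod a)\<^sup>2 / 2) * sqrt (fact m) / fact (m - n)) * a ^ (m - n)"

lemma coh_series_term:
  "((- a) ^ j / of_real (fact j)) * cre_coh a (n + j) m
     = (if n + j \<le> m then basis_weight a n m * ((-1) ^ j * of_nat ((m - n) choose j)) else 0)"
proof (cases "n + j \<le> m")
  case True
  define t where "t = m - n"
  define E where "E = exp (- (cmod a)\<^sup>2 / 2)"
  have jt: "j \<le> t" and mt: "m - (n + j) = t - j" using True unfolding t_def by auto
  have sq: "sqrt (falling_fact m (n + j)) / sqrt (fact (t - j)) = sqrt (fact m) / fact (t - j)"
    unfolding falling_fact_eq[OF True] mt by (simp add: real_sqrt_divide field_simps)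
  have ch: "real (t choose j) = fact t / (fact j * fact (t - j))"
    using binomial_fact[OF jt] by simp
  have r: "sqrt (falling_fact m (n + j)) / sqrt (fact (t - j)) * E / fact j
      = E * sqrt (fact m) / fact t * real (t choose j)"
    unfolding sq ch by (simp add: field_simps)
  have "((- a) ^ j / of_real (fact j)) * cre_coh a (n + j) m
      = complex_of_real (sqrt (falling_fact m (n + j)) / sqrt (fact (t - j)) * E / fact j)
        * ((- a) ^ j * a ^ (t - j))"
    using True unfolding cre_coh_eq mt E_def by (simp add: mult_ac)
  also have "(- a) ^ j * a ^ (t - j) = (-1) ^ j * (a ^ j * a ^ (t - j))"
    by (simp only: power_minus[of a] mult.assoc)
  also have "a ^ j * a ^ (t - j) = a ^ t"
    using jt by (simp flip: power_add)
  finally have "((- a) ^ j / of_real (fact j)) * cre_coh a (n + j) m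
      = complex_of_real (E * sqrt (fact m) / fact t * real (t choose j)) * ((-1) ^ j * a ^ t)"
    unfolding r .
  then show ?thesis
    unfolding basis_weight_def if_P[OF True] t_def[symmetric] E_def[symmetric]
    by (simp only: of_real_mult of_real_of_nat_eq mult_ac)
qed (simp add: cre_coh_eq)

lemma coh_series_below:
  assumes "m < n + J"
  shows "(\<Sum>j<J. ((- a) ^ j / of_real (fact j)) * cre_coh a (n + j) m)
    = basis_weight a n n * fock_basis n m"
proof (cases "n \<le> m")
  case True
  define t where "t = m - n"
  have "t < J" using assms True unfolding t_def by simp
  have "(\<Sum>j<J. ((- a) ^ j / of_real (fact j)) * cre_coh a (n + j) m)
      = (\<Sum>j<J. (if j \<in> {..t} then basis_weight a n m * ((-1) ^ j * of_nat (t choose j)) else 0))"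
    unfolding coh_series_term by (rule sum.cong) (use True in \<open>auto simp: t_def\<close>)
  also have "\<dots> = (\<Sum>j\<in>{..<J} \<inter> {..t}. basis_weight a n m * ((-1) ^ j * of_nat (t choose j)))"
    by (rule sum.inter_restrict[symmetric]) simp
  also have "{..<J} \<inter> {..t} = {..t}" using \<open>t < J\<close> by auto
  also have "(\<Sum>j\<le>t. basis_weight a n m * ((-1) ^ j * of_nat (t choose j)))
      = basis_weight a n m * (\<Sum>j\<le>t. (-1) ^ j * of_nat (t choose j))"
    by (simp add: sum_distrib_left)
  also have "\<dots> = basis_weight a n n * fock_basis n m"
  proof (cases "t = 0")
    case False
    then show ?thesis
      using choose_alternating_sum[of t, where 'a=complex] unfolding t_def fock_basis_def by auto
  qed (use True in \<open>simp add: t_def fock_basis_def\<close>)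
  finally show ?thesis .
qed (unfold coh_series_term, simp add: fock_basis_def)

lemma coh_series_bound:
  assumes "n \<le> m"
  shows "cmod (\<Sum>j<J. ((- a) ^ j / of_real (fact j)) * cre_coh a (n + j) m)
     \<le> cmod (basis_weight a n m) * 2 ^ (m - n)"
proof -
  define t where "t = m - n"
  have "cmod (\<Sum>j<J. ((- a) ^ j / of_real (fact j)) * cre_coh a (n + j) m)
      \<le> (\<Sum>j<J. cmod (if n + j \<le> m then basis_weight a n m * ((-1) ^ j * of_nat (t choose j)) else 0))"
    unfolding coh_series_term t_def by (rule norm_sum)
  also have "\<dots> = (\<Sum>j<J. (if j \<in> {..t} then cmod (basis_weight a n m) * real (t choose j) else 0))"
    by (rule sum.cong) (use assms in \<open>auto simp: t_def norm_mult norm_power\<close>)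
  also have "\<dots> = (\<Sum>j\<in>{..<J} \<inter> {..t}. cmod (basis_weight a n m) * real (t choose j))"
    by (rule sum.inter_restrict[symmetric]) simp
  also have "\<dots> \<le> (\<Sum>j\<le>t. cmod (basis_weight a n m) * real (t choose j))"
    by (rule sum_mono2) auto
  also have "\<dots> = cmod (basis_weight a n m) * 2 ^ t"
    using arg_cong[OF choose_row_sum[of t], of real] by (simp add: sum_distrib_left[symmetric])
  finally show ?thesis unfolding t_def .
qed

lemma summable_basis_weight:
  "summable (\<lambda>m. if n \<le> m then (cmod (basis_weight a n m) * 2 ^ (m - n))\<^sup>2 else 0)"
proof -
  define E where "E = exp (- (cmod a)\<^sup>2 / 2)"
  have eq: "(cmod (basis_weight a n m) * 2 ^ (m - n))\<^sup>2
      = E\<^sup>2 * (falling_fact m n * (4 * (cmod a)\<^sup>2) ^ (m - n) / fact (m - n))" if "n \<le> m" for m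
  proof -
    have X: "cmod (basis_weight a n m) * 2 ^ (m - n)
        = E * sqrt (fact m) / fact (m - n) * (2 * cmod a) ^ (m - n)"
      unfolding basis_weight_def E_def by (simp add: norm_mult norm_power norm_divide power_mult_distrib)
    have "((2 * cmod a) ^ (m - n))\<^sup>2 = ((2 * cmod a)\<^sup>2) ^ (m - n)"
      by (metis power_mult mult.commute)
    also have "(2 * cmod a)\<^sup>2 = 4 * (cmod a)\<^sup>2"
      by (simp add: power_mult_distrib)
    finally have Y: "((2 * cmod a) ^ (m - n))\<^sup>2 = (4 * (cmod a)\<^sup>2) ^ (m - n)" .
    have "(cmod (basis_weight a n m) * 2 ^ (m - n))\<^sup>2
        = (E * sqrt (fact m) / fact (m - n))\<^sup>2 * (4 * (cmod a)\<^sup>2) ^ (m - n)"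
      unfolding X power_mult_distrib[of _ "(2 * cmod a) ^ (m - n)"] Y ..
    then show ?thesis
      using that by (simp add: falling_fact_eq power_divide power_mult_distrib power2_eq_square)
  qed
  have "summable (\<lambda>m. E\<^sup>2 * (falling_fact m n * (4 * (cmod a)\<^sup>2) ^ (m - n) / fact (m - n)))"
    by (intro summable_mult summable_falling_fact_exp) simp
  then show ?thesis
    by (rule summable_comparison_test'[where N=0])
      (simp add: eq falling_fact_nonneg)
qed

text \<open>The series \<open>\<Sum>\<^sub>j (-a)\<^sup>j/j! (a\<^sup>\<dagger>)\<^bsup>n+j\<^esup>|a\<rangle> = e\<^bsup>-a a\<^sup>\<dagger>\<^esup>(a\<^sup>\<dagger>)\<^sup>n|a\<rangle>\<close> is a multiple of \<open>|n\<rangle>\<close>.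
  Its partial sums are exact below level \<open>n + J\<close> and dominated by a fixed square-summable
  sequence above it.\<close>

lemma fock_basis_in_H_closure:
  assumes S: "fock_subspace S" and coh: "\<And>p. n \<le> p \<Longrightarrow> cre_coh a p \<in> H_closure S"
  shows "fock_basis n \<in> H_closure S"
proof -
  define K where "K = basis_weight a n n"
  define B where "B m = (if n \<le> m then (cmod (basis_weight a n m) * 2 ^ (m - n))\<^sup>2 else 0)" for m
  define A where "A J = (\<lambda>m. \<Sum>j<J. ((- a) ^ j / of_real (fact j)) * cre_coh a (n + j) m)" for J
  have B: "summable B"
    unfolding B_def by (rule summable_basis_weight)
  have closure: "fock_subspace (H_closure S)"
    by (rule fock_subspace_H_closure[OF S])
  have A: "A J \<in> H_closure S" for J
    unfolding A_def by (intro fock_subspace_sum[OF closure] fock_subspace_scale[OF closure] coh) auto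
  have err: "(cmod (K * fock_basis n m - A J m))\<^sup>2 \<le> (if n + J \<le> m then B m else 0)"
    if "1 \<le> J" for J m
  proof (cases "m < n + J")
    case True
    then show ?thesis unfolding A_def K_def coh_series_below[OF True] by simp
  next
    case False
    then have "n \<le> m" "fock_basis n m = 0" using that by (auto simp: fock_basis_def)
    moreover have "(cmod (A J m))\<^sup>2 \<le> B m"
      unfolding A_def B_def if_P[OF \<open>n \<le> m\<close>]
      by (intro power_mono coh_series_bound[OF \<open>n \<le> m\<close>] norm_ge_zero)
    ultimately show ?thesis using False by simp
  qed
  have "(\<lambda>m. K * fock_basis n m) \<in> H_closure S"
  proof (rule H_closure_closed)
    show "in_H (\<lambda>m. K * fock_basis n m)" by (rule in_H_scale(1)[OF in_H_fock_basis])
    fix \<delta> :: real assume "0 < \<delta>"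
    obtain M0 where tail: "\<And>M. summable (\<lambda>m. if M \<le> m then B m else 0)"
      "\<And>M. M0 \<le> M \<Longrightarrow> (\<Sum>m. if M \<le> m then B m else 0) < \<delta>"
      using summable_tail_small[OF B \<open>0 < \<delta>\<close>] by blast
    have "sqnorm (\<lambda>m. K * fock_basis n m - A (M0 + 1) m) \<le> (\<Sum>m. if n + (M0 + 1) \<le> m then B m else 0)"
      by (intro in_H_bounded(2) err tail(1)) simp
    then show "\<exists>\<zeta>\<in>H_closure S. sqnorm (\<lambda>m. K * fock_basis n m - \<zeta> m) < \<delta>"
      using A tail(2)[of "n + (M0 + 1)"] by (intro bexI[of _ "A (M0 + 1)"]) simp_all
  qed
  moreover have "K \<noteq> 0" unfolding K_def basis_weight_def by simp
  ultimately show ?thesis by (rule fock_subspace_cancel[OF closure])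
qed

section \<open>Filtering by roots of unity\<close>

lemma sum_root_unity_powers:
  assumes "0 < k"
  shows "(\<Sum>r<k. (cis (2 * pi / real k) ^ q) ^ r) = (if k dvd q then of_nat k else 0)"
proof -
  define \<omega> where "\<omega> = cis (2 * pi / real k) ^ q"
  have "\<omega> = cis (real q * (2 * pi / real k))"
    unfolding \<omega>_def by (rule Complex.DeMoivre)
  also have "\<dots> = exp (2 * complex_of_real pi * \<i> * of_nat q / of_nat k)"
    unfolding cis_conv_exp by (simp add: field_simps)
  finally have \<omega>1: "\<omega> = 1 \<longleftrightarrow> k dvd q"
    using complex_root_unity_eq_1[of k q] assms by simp
  have "cis (2 * pi / real k) ^ k = cis (real k * (2 * pi / real k))"
    by (rule Complex.DeMoivre)
  then have "cis (2 * pi / real k) ^ k = 1"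
    using assms by simp
  then have "\<omega> ^ k = 1"
    unfolding \<omega>_def by (metis power_mult mult.commute power_one)
  then show ?thesis
    using \<omega>1 geometric_sum[of \<omega> k] unfolding \<omega>_def[symmetric] by auto
qed

lemma cre_coh_rotated:
  assumes "cmod \<omega> = 1" "p \<le> m"
  shows "(\<omega> ^ a) ^ r * cre_coh (z * \<omega> ^ r) p m = cre_coh z p m * (\<omega> ^ (a + (m - p))) ^ r"
proof -
  have "(z * \<omega> ^ r) ^ (m - p) = z ^ (m - p) * (\<omega> ^ (m - p)) ^ r"
    by (simp add: power_mult_distrib mult.commute flip: power_mult)
  moreover have "(\<omega> ^ a) ^ r * (\<omega> ^ (m - p)) ^ r = (\<omega> ^ (a + (m - p))) ^ r"
    by (simp add: power_add power_mult_distrib)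
  ultimately show ?thesis
    using assms unfolding cre_coh_eq by (simp add: norm_mult norm_power mult_ac)
qed

lemma root_filtered_cre_coh:
  assumes "0 < k"
  shows "(\<Sum>r<k. (cis (2 * pi / real k) ^ a) ^ r * cre_coh (z * cis (2 * pi / real k) ^ r) p m)
    = (if p \<le> m \<and> k dvd (a + (m - p)) then of_nat k * cre_coh z p m else 0)"
proof (cases "p \<le> m")
  case True
  then have "(\<Sum>r<k. (cis (2 * pi / real k) ^ a) ^ r * cre_coh (z * cis (2 * pi / real k) ^ r) p m)
      = cre_coh z p m * (\<Sum>r<k. (cis (2 * pi / real k) ^ (a + (m - p))) ^ r)"
    by (simp add: cre_coh_rotated sum_distrib_left)
  then show ?thesis
    using True by (simp add: sum_root_unity_powers[OF assms])
qed (simp add: cre_coh_eq)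

lemma cre_coh_nonzero:
  assumes "z \<noteq> 0" "p \<le> m"
  shows "cre_coh z p m \<noteq> 0"
  using assms by (simp add: cre_coh_eq falling_fact_eq)

text \<open>Averaging the coherent states \<open>|z\<omega>\<^sup>r\<rangle>\<close> against the character \<open>\<omega>\<^bsup>ar\<^esup>\<close> keeps only the
  levels \<open>m \<equiv> -a\<close> modulo \<open>k\<close>; choosing \<open>a\<close> suitably, the lowest surviving level is \<open>d\<close>.\<close>

lemma fock_basis_in_H_closure_step:
  assumes S: "fock_subspace S" and "0 < k" "z \<noteq> 0"
    and gen: "\<And>r j. r < k \<Longrightarrow> cre_coh (z * cis (2 * pi / real k) ^ r) (k * j) \<in> S"
    and above: "\<And>m. d < m \<Longrightarrow> fock_basis m \<in> H_closure S"
  shows "fock_basis d \<in> H_closure S"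
proof -
  define \<omega> where "\<omega> = cis (2 * pi / real k)"
  define p where "p = k * (d div k)"
  define a where "a = k - d mod k"
  define X where "X = (\<lambda>m. \<Sum>r<k. (\<omega> ^ a) ^ r * cre_coh (z * \<omega> ^ r) p m)"
  have "p \<le> d" "d - p < k" "a + (d - p) = k"
    using \<open>0 < k\<close> unfolding p_def a_def by (simp_all add: minus_mod_eq_mult_div[symmetric])
  have X_eq: "X m = (if p \<le> m \<and> k dvd (a + (m - p)) then of_nat k * cre_coh z p m else 0)" for m
    unfolding X_def \<omega>_def by (rule root_filtered_cre_coh[OF \<open>0 < k\<close>])
  have X: "X \<in> H_closure S"
    unfolding X_def \<omega>_def
    by (intro H_closure_superset fock_subspace_sum[OF S] fock_subspace_scale[OF S]
        in_H_sum in_H_scale(1) in_H_cre_coh) (auto simp: p_def intro: gen)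
  have below: "X m = 0" if "m < d" for m
  proof (cases "p \<le> m")
    case True
    then have "0 < a + (m - p)" "a + (m - p) < k"
      using that \<open>a + (d - p) = k\<close> \<open>d - p < k\<close> unfolding a_def by linarith+
    then show ?thesis unfolding X_eq by (auto dest: nat_dvd_not_less)
  qed (simp add: X_eq)
  have Xd: "X d \<noteq> 0"
    unfolding X_eq using \<open>p \<le> d\<close> \<open>a + (d - p) = k\<close> \<open>0 < k\<close> cre_coh_nonzero[OF \<open>z \<noteq> 0\<close>] by simp
  show ?thesis
    by (rule fock_basis_in_H_closure_lowest[OF S X below Xd above])
qed

lemma fock_basis_in_H_closure_all:
  assumes S: "fock_subspace S" and "0 < k" "z \<noteq> 0"
    and gen: "\<And>r j. r < k \<Longrightarrow> cre_coh (z * cis (2 * pi / real k) ^ r) (k * j) \<in> S"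
    and top: "\<And>m. D \<le> m \<Longrightarrow> fock_basis m \<in> H_closure S"
  shows "fock_basis m \<in> H_closure S"
proof (induction "D - m" arbitrary: m rule: less_induct)
  case less
  show ?case
  proof (cases "D \<le> m")
    case False
    show ?thesis
    proof (rule fock_basis_in_H_closure_step[OF S \<open>0 < k\<close> \<open>z \<noteq> 0\<close> gen])
      fix m' assume "m < m'"
      with False show "fock_basis m' \<in> H_closure S" by (intro less) arith
    qed
  qed (rule top)
qed

section \<open>The span of the generalized eigenvectors\<close>

lemma falling_fact_ffact_leading: "ffact_leading d 1 (\<lambda>n. falling_fact n d)"
  unfolding ffact_leading_def ffact_span_def
  by (intro bexI[of _ "\<lambda>n. 0"] CollectI exI[of _ "\<lambda>_. 0"]) simp_all

lemma rcomm_coh_expansion: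
  assumes "0 < k" "1 \<le> s" "s \<le> k"
  obtains c \<gamma> where "c \<noteq> 0"
    "(cre ^^ q) (rcomm (opL \<alpha> k) (opLdag \<alpha> k) s (coh z))
       = (\<lambda>n. (complex_of_real c * z ^ (k - s)) * cre_coh z (q + k * (s - 1) + (k - s)) n
            + (\<Sum>t<k - s. \<gamma> t * cre_coh z (q + k * (s - 1) + t) n))"
proof -
  obtain c where c: "c \<noteq> 0"
    "ffact_leading (k - s) c ((shift_diff k ^^ s) (\<lambda>n. falling_fact n k))"
    using funpow_shift_diff_ffact_leading[OF \<open>0 < k\<close> _ falling_fact_ffact_leading \<open>s \<le> k\<close>] by auto
  obtain \<gamma> where \<gamma>: "(cre ^^ (q + k * (s - 1)))
        (\<lambda>m. complex_of_real ((shift_diff k ^^ s) (\<lambda>n. falling_fact n k) m) * coh z m)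
      = (\<lambda>n. (complex_of_real c * z ^ (k - s)) * cre_coh z (q + k * (s - 1) + (k - s)) n
          + (\<Sum>t<k - s. \<gamma> t * cre_coh z (q + k * (s - 1) + t) n))"
    by (rule diagonal_coh_expansion[OF c(2)])
  show ?thesis
    by (rule that[OF c(1)]) (unfold rcomm_opL_opLdag[OF \<open>1 \<le> s\<close>] cre_pow_cre_pow, rule \<gamma>)
qed

text \<open>Triangularity: by \<open>rcomm_coh_expansion\<close> with \<open>s = k - t\<close>, the top coefficient
  \<open>(a\<^sup>\<dagger>)\<^bsup>km+t\<^esup>|z\<rangle>\<close> is reached from the commutator generators modulo lower levels \<open>km + t'\<close>, \<open>t' < t\<close>.\<close>

lemma cre_coh_in_subspace:
  assumes S: "fock_subspace S" and "0 < k" "z \<noteq> 0"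
    and gen: "\<And>j. cre_coh z (k * j) \<in> S"
    and comm: "\<And>i s. 1 \<le> s \<Longrightarrow> s \<le> k - 1
      \<Longrightarrow> (cre ^^ (k * i)) (rcomm (opL \<alpha> k) (opLdag \<alpha> k) s (coh z)) \<in> S"
    and "k - 2 \<le> m" "t < k"
  shows "cre_coh z (k * m + t) \<in> S"
  using \<open>t < k\<close>
proof (induction t rule: less_induct)
  case (less t)
  show ?case
  proof (cases "t = 0")
    case False
    define s where "s = k - t"
    have s: "1 \<le> s" "s \<le> k - 1" "s \<le> k" "k - s = t"
      using less.prems False unfolding s_def by auto
    have km: "k * (m + 1 - s) + k * (s - 1) = k * m"
      using s \<open>k - 2 \<le> m\<close> by (simp flip: add_mult_distrib2)
    obtain c \<gamma> where "c \<noteq> 0" and expansion: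
      "(cre ^^ (k * (m + 1 - s))) (rcomm (opL \<alpha> k) (opLdag \<alpha> k) s (coh z))
         = (\<lambda>n. (complex_of_real c * z ^ (k - s)) * cre_coh z (k * (m + 1 - s) + k * (s - 1) + (k - s)) n
              + (\<Sum>t<k - s. \<gamma> t * cre_coh z (k * (m + 1 - s) + k * (s - 1) + t) n))"
      by (rule rcomm_coh_expansion[OF \<open>0 < k\<close> s(1,3)])
    have "(\<lambda>n. (complex_of_real c * z ^ t) * cre_coh z (k * m + t) n
        + (\<Sum>t'<t. \<gamma> t' * cre_coh z (k * m + t') n)) \<in> S"
      using comm[OF s(1,2), of "m + 1 - s"] unfolding expansion km s(4) .
    moreover have "(\<lambda>n. \<Sum>t'<t. \<gamma> t' * cre_coh z (k * m + t') n) \<in> S"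
      using less by (intro fock_subspace_sum[OF S] fock_subspace_scale[OF S]) auto
    ultimately have "(\<lambda>n. ((complex_of_real c * z ^ t) * cre_coh z (k * m + t) n
        + (\<Sum>t'<t. \<gamma> t' * cre_coh z (k * m + t') n)) - (\<Sum>t'<t. \<gamma> t' * cre_coh z (k * m + t') n)) \<in> S"
      by (rule fock_subspace_diff[OF S])
    then have "(\<lambda>n. (complex_of_real c * z ^ t) * cre_coh z (k * m + t) n) \<in> S"
      by simp
    then show ?thesis
      by (rule fock_subspace_cancel[OF S]) (simp add: \<open>c \<noteq> 0\<close> \<open>z \<noteq> 0\<close>)
  qed (simp add: gen)
qed

lemma cre_pow_mult_in_subspace:
  assumes S: "fock_subspace S" and orbit: "\<And>j. (opLdag \<alpha> k ^^ j) y \<in> S"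
  shows "(cre ^^ (k * j)) y \<in> S"
  using orbit
proof (induction j arbitrary: y)
  case 0
  then show ?case using "0.prems"[of 0] by simp
next
  case (Suc j)
  have "(cre ^^ (k * Suc j)) y = (cre ^^ (k * j)) ((cre ^^ k) y)"
    by (simp add: cre_pow_cre_pow add.commute)
  also have "(cre ^^ k) y = (\<lambda>n. opLdag \<alpha> k y n + complex_of_real (\<alpha> ^ k) * y n)"
    unfolding opLdag_def by simp
  finally have "(cre ^^ (k * Suc j)) y
      = (\<lambda>n. (cre ^^ (k * j)) (opLdag \<alpha> k y) n + complex_of_real (\<alpha> ^ k) * (cre ^^ (k * j)) y n)"
    by (simp add: cre_pow_add cre_pow_scale)
  moreover have "(cre ^^ (k * j)) (opLdag \<alpha> k y) \<in> S"
    using Suc.prems[of "Suc _"] by (intro Suc.IH) (simp only: funpow_Suc_right comp_apply)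
  moreover have "(cre ^^ (k * j)) y \<in> S"
    by (rule Suc.IH[OF Suc.prems])
  ultimately show ?case
    by (simp add: fock_subspace_add[OF S] fock_subspace_scale[OF S])
qed

lemma coh_root_in_kerL: "r < k \<Longrightarrow> coh (complex_of_real \<alpha> * cis (2 * pi / real k) ^ r) \<in> kerL \<alpha> k"
  unfolding kerL_def by (rule cspan_superset) blast

definition E_sum :: "real \<Rightarrow> nat \<Rightarrow> fock set" where
  "E_sum \<alpha> k = sum_set (Ea \<alpha> k) (Esharp \<alpha> k)"

lemma fock_subspace_E_sum: "fock_subspace (E_sum \<alpha> k)"
  unfolding E_sum_def Ea_def Esharp_def by (intro fock_subspace_sum_set fock_subspace_cspan)

lemma cre_coh_root_in_E_sum:
  assumes "r < k"
  shows "cre_coh (complex_of_real \<alpha> * cis (2 * pi / real k) ^ r) (k * j) \<in> E_sum \<alpha> k"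
  unfolding cre_coh_def
proof (rule cre_pow_mult_in_subspace[OF fock_subspace_E_sum])
  show "(opLdag \<alpha> k ^^ i) (coh (complex_of_real \<alpha> * cis (2 * pi / real k) ^ r)) \<in> E_sum \<alpha> k" for i
    unfolding E_sum_def using coh_root_in_kerL[OF assms]
    by (intro sum_set_left) (auto simp: Ea_def Esharp_def fock_subspace_cspan intro!: cspan_superset)
qed

lemma rcomm_coh_in_E_sum:
  assumes "0 < k" "1 \<le> s" "s \<le> k - 1"
  shows "(cre ^^ (k * i)) (rcomm (opL \<alpha> k) (opLdag \<alpha> k) s (coh (complex_of_real \<alpha>))) \<in> E_sum \<alpha> k"
proof (rule cre_pow_mult_in_subspace[OF fock_subspace_E_sum])
  show "(opLdag \<alpha> k ^^ j) (rcomm (opL \<alpha> k) (opLdag \<alpha> k) s (coh (complex_of_real \<alpha>))) \<in> E_sum \<alpha> k"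
    for j
    unfolding E_sum_def using coh_root_in_kerL[OF assms(1), of \<alpha>] assms(2,3)
    by (intro sum_set_right) (auto simp: Ea_def Esharp_def fock_subspace_cspan intro!: cspan_superset)
qed

lemma cre_coh_in_E_sum:
  assumes "0 < k" "\<alpha> \<noteq> 0" "k * (k - 2) \<le> p"
  shows "cre_coh (complex_of_real \<alpha>) p \<in> E_sum \<alpha> k"
proof -
  have gen: "cre_coh (complex_of_real \<alpha>) (k * j) \<in> E_sum \<alpha> k" for j
    using cre_coh_root_in_E_sum[OF assms(1), of \<alpha> j] by simp
  have "k - 2 \<le> p div k" using div_le_mono[OF assms(3), of k] assms(1) by simp
  then show ?thesis
    using cre_coh_in_subspace[OF fock_subspace_E_sum assms(1) _ gen rcomm_coh_in_E_sum[OF assms(1)],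
        of "p div k" "p mod k"] assms
    by simp
qed

theorem lemma9:
  fixes \<alpha> :: real and k :: nat
  assumes "\<alpha> \<noteq> 0" and "k \<ge> 3"
  shows "dense_in_H {(\<lambda>n. x n + y n) | x y. x \<in> Ea \<alpha> k \<and> y \<in> Esharp \<alpha> k}"
proof -
  have k: "0 < k" and z: "complex_of_real \<alpha> \<noteq> 0" using assms by simp_all
  note S = fock_subspace_E_sum[of \<alpha> k]
  have "fock_basis m \<in> H_closure (E_sum \<alpha> k)" if "k * (k - 2) \<le> m" for m
    using that assms(1) k
    by (intro fock_basis_in_H_closure[OF S, of _ "complex_of_real \<alpha>"] H_closure_superset
        cre_coh_in_E_sum in_H_cre_coh) simp_all
  then have "fock_basis m \<in> H_closure (E_sum \<alpha> k)" for m
    using fock_basis_in_H_closure_all[OF S k z cre_coh_root_in_E_sum] by blast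
  then show ?thesis
    using dense_in_H_if_basis_in_closure[OF S] unfolding E_sum_def sum_set_def by blast
qed

end
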